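(* Let $n\ge1$ and $\gamma=1$ (so $\beta=2$). There exist no $\ell,R>0$ and $U:[0,R]\to[0,\infty)$, continuous on $[0,R]$ and $C^2$ on $[0,R)$, such that $$U''+\Big(\frac{n-1}{r}-\frac r2\Big)U'+U=1\ \text{ in }(0,R),\quad U(0)=\ell,\ U'(0)=0,\quad U(R)=0,\ (U^{1/2})'(R)=-\frac{\sqrt2}{2}.$$
   Context: $(U^{1/2})'(R)$ is the left derivative at $R$, i.e. $\lim_{r\uparrow R}U^{1/2}(r)/(r-R)$. *)

theory Defs
  imports "HOL-Analysis.Analysis"
begin

end

theory Submission
  imports Defs
begin

text \<open>
  The function \<open>2n - r\<^sup>2\<close> solves the homogeneous equation
  \<open>V'' + ((n - 1)/r - r/2) V' + V = 0\<close>, so the Wronskian \<open>W\<close> of \<open>U - 1\<close> and \<open>2n - r\<^sup>2\<close>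
  satisfies Abel's identity \<open>(r\<^bsup>n-1\<^esup> e\<^bsup>-r\<^sup>2/4\<^esup> W)' = 0\<close>. As \<open>U'(0) = 0\<close>, \<open>W\<close> vanishes,
  so near \<open>R\<close> the solution is \<open>U = 1 + c (2n - r\<^sup>2)\<close>, and \<open>U(R) = 0\<close> forces
  \<open>U = c (R\<^sup>2 - r\<^sup>2)\<close> with \<open>c \<noteq> 0\<close>. Such a \<open>U\<close> has a simple zero at \<open>R\<close>, so
  \<open>\<surd>U / (r - R)\<close> diverges; the boundary condition fails for any finite slope.
\<close>

definition radial_weight :: "nat \<Rightarrow> real \<Rightarrow> real" where
  "radial_weight n r = r ^ (n - 1) * exp (- (r\<^sup>2) / 4)"

lemma radial_weight_has_real_derivative:
  assumes "n \<ge> 1" "r > 0"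
  shows "(radial_weight n has_real_derivative ((real n - 1) / r - r / 2) * radial_weight n r) (at r)"
proof -
  have power_deriv: "real (n - 1) * r ^ (n - 1 - 1) = (real n - 1) / r * r ^ (n - 1)"
  proof (cases "n = 1")
    case False
    then have "r ^ (n - 1 - 1) * r = r ^ (n - 1)"
      using assms(1) by (intro power_minus_mult) simp
    then show ?thesis
      using assms by (simp add: of_nat_diff field_simps)
  qed simp
  have "(radial_weight n has_real_derivative
          real (n - 1) * r ^ (n - 1 - 1) * exp (- (r\<^sup>2) / 4)
          + r ^ (n - 1) * (exp (- (r\<^sup>2) / 4) * (- (2 * r) / 4))) (at r)"
    unfolding radial_weight_def by (rule derivative_eq_intros refl | simp)+
  then show ?thesis
    unfolding power_deriv radial_weight_def by (simp add: field_simps)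
qed

lemma zero_by_integrating_factor:
  fixes E w p :: "real \<Rightarrow> real"
  assumes E_cont: "continuous_on {a..<b} E" and w_cont: "continuous_on {a..<b} w"
    and "w a = 0"
    and E_deriv: "\<And>s. a < s \<Longrightarrow> s < b \<Longrightarrow> (E has_real_derivative p s * E s) (at s)"
    and w_deriv: "\<And>s. a < s \<Longrightarrow> s < b \<Longrightarrow> (w has_real_derivative - p s * w s) (at s)"
    and E_nonzero: "\<And>s. a < s \<Longrightarrow> s < b \<Longrightarrow> E s \<noteq> 0"
    and "a < r" "r < b"
  shows "w r = 0"
proof -
  have "((\<lambda>s. E s * w s) has_real_derivative 0) (at s)" if "a < s" "s < b" for s
    using DERIV_mult'[OF E_deriv w_deriv, OF that that] by simp
  moreover have "continuous_on {a..r} (\<lambda>s. E s * w s)"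
    using continuous_on_mult[OF E_cont w_cont] by (rule continuous_on_subset) (use \<open>r < b\<close> in auto)
  ultimately have "E r * w r = E a * w a"
    using \<open>a < r\<close> \<open>r < b\<close> by (intro DERIV_isconst2[of a r]) auto
  then show ?thesis
    using \<open>w a = 0\<close> E_nonzero[OF \<open>a < r\<close> \<open>r < b\<close>] by simp
qed

lemma proportional_if_wronskian_zero:
  fixes f g f' g' :: "real \<Rightarrow> real"
  assumes f_deriv: "\<And>x. x \<in> {a<..<b} \<Longrightarrow> (f has_real_derivative f' x) (at x)"
    and g_deriv: "\<And>x. x \<in> {a<..<b} \<Longrightarrow> (g has_real_derivative g' x) (at x)"
    and g_nonzero: "\<And>x. x \<in> {a<..<b} \<Longrightarrow> g x \<noteq> 0"
    and wronskian: "\<And>x. x \<in> {a<..<b} \<Longrightarrow> f x * g' x = f' x * g x"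
  obtains c where "\<And>x. x \<in> {a<..<b} \<Longrightarrow> f x = c * g x"
proof -
  have "((\<lambda>x. f x / g x) has_real_derivative 0) (at x within {a<..<b})" if "x \<in> {a<..<b}" for x
  proof -
    have "((\<lambda>x. f x / g x) has_real_derivative (f' x * g x - f x * g' x) / (g x * g x)) (at x)"
      using f_deriv[OF that] g_deriv[OF that] g_nonzero[OF that] by (rule DERIV_divide)
    then show ?thesis
      using wronskian[OF that] by (simp add: has_field_derivative_at_within)
  qed
  then obtain c where "\<forall>x\<in>{a<..<b}. f x / g x = c"
    using has_field_derivative_zero_constant[OF convex_real_interval(8)] by presburger
  then show ?thesis
    using that g_nonzero by (simp add: field_simps)
qed

lemma radial_wronskian_has_real_derivative:
  fixes U U' U'' :: "real \<Rightarrow> real" and n :: nat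
  assumes "(U has_real_derivative U' r) (at r)" "(U' has_real_derivative U'' r) (at r)"
    and ode: "U'' r + ((real n - 1) / r - r / 2) * U' r + U r = 1" and "r \<noteq> 0"
  shows "((\<lambda>s. (U s - 1) * (- 2 * s) - U' s * (2 * real n - s\<^sup>2)) has_real_derivative
           - ((real n - 1) / r - r / 2) * ((U r - 1) * (- 2 * r) - U' r * (2 * real n - r\<^sup>2))) (at r)"
proof -
  define p where "p = (real n - 1) / r - r / 2"
  have U''_eq: "U'' r = 1 - U r - p * U' r"
    using ode unfolding p_def by linarith
  have p_r: "p * r = real n - 1 - r\<^sup>2 / 2"
    using \<open>r \<noteq> 0\<close> unfolding p_def by (simp add: field_simps power2_eq_square)
  have "((\<lambda>s. (U s - 1) * (- 2 * s) - U' s * (2 * real n - s\<^sup>2)) has_real_derivative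
          U' r * (- 2 * r) + (U r - 1) * (- 2) - (U'' r * (2 * real n - r\<^sup>2) + U' r * (- 2 * r))) (at r)"
    by (auto intro!: derivative_eq_intros assms(1,2))
  moreover have "U' r * (- 2 * r) + (U r - 1) * (- 2) - (U'' r * (2 * real n - r\<^sup>2) + U' r * (- 2 * r))
      = - p * ((U r - 1) * (- 2 * r) - U' r * (2 * real n - r\<^sup>2))"
    unfolding U''_eq using p_r by algebra
  ultimately show ?thesis
    unfolding p_def by simp
qed

lemma sqrt_quotient_convergent_imp_no_simple_zero:
  fixes U :: "real \<Rightarrow> real"
  assumes "R > 0"
    and U_eq: "eventually (\<lambda>r. U r = c * (R\<^sup>2 - r\<^sup>2)) (at_left R)"
    and slope: "((\<lambda>r. sqrt (U r) / (r - R)) \<longlongrightarrow> L) (at_left R)"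
  shows "c = 0"
proof -
  have "((\<lambda>r. (sqrt (U r) / (r - R))\<^sup>2 * (R - r)) \<longlongrightarrow> L\<^sup>2 * (R - R)) (at_left R)"
    by (intro tendsto_intros slope)
  moreover have "eventually (\<lambda>r. (sqrt (U r) / (r - R))\<^sup>2 * (R - r) = \<bar>c\<bar> * (R + r)) (at_left R)"
    using U_eq eventually_at_left_real[OF \<open>R > 0\<close>]
  proof eventually_elim
    case (elim r)
    then have U_r: "U r = c * ((R + r) * (R - r))"
      by (simp add: power2_eq_square algebra_simps)
    \<comment> \<open>\<open>sqrt\<close> is odd on negative arguments, so \<open>(sqrt x)\<^sup>2 = \<bar>x\<bar>\<close> and no sign condition on \<open>U\<close> is needed\<close>
    have "(sqrt (U r))\<^sup>2 = \<bar>c\<bar> * (R + r) * (R - r)"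
      unfolding U_r using elim(2) by (simp add: abs_mult power2_eq_square flip: real_sqrt_mult)
    then show ?case
      using elim(2) by (simp add: power_divide power2_commute[of r R]) (simp add: power2_eq_square)
  qed
  ultimately have "((\<lambda>r. \<bar>c\<bar> * (R + r)) \<longlongrightarrow> 0) (at_left R)"
    using Lim_transform_eventually by fastforce
  moreover have "((\<lambda>r. \<bar>c\<bar> * (R + r)) \<longlongrightarrow> \<bar>c\<bar> * (R + R)) (at_left R)"
    by (intro tendsto_intros)
  ultimately have "\<bar>c\<bar> * (R + R) = 0"
    using tendsto_unique[OF trivial_limit_at_left_real] by metis
  then show ?thesis
    using \<open>R > 0\<close> by simp
qed

lemma radial_solution_explicit_near_boundary:
  fixes n :: nat and U U' U'' :: "real \<Rightarrow> real"
  assumes "n \<ge> 1" "R > 0"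
    and U_deriv: "\<forall>r\<in>{0..<R}. (U has_real_derivative U' r) (at r within {0..<R})"
    and U'_deriv: "\<forall>r\<in>{0..<R}. (U' has_real_derivative U'' r) (at r within {0..<R})"
    and ode: "\<forall>r\<in>{0<..<R}. U'' r + ((real n - 1) / r - r / 2) * U' r + U r = 1"
    and "U' 0 = 0"
  obtains a c where "a < R" "\<forall>r\<in>{a<..<R}. U r = 1 + c * (2 * real n - r\<^sup>2)"
proof -
  have at_interior: "at r within {0..<R} = at r" if "0 < r" "r < R" for r
    using that by (intro at_within_open_subset[of _ "{0<..<R}"]) auto
  have U_at: "(U has_real_derivative U' r) (at r)"
    and U'_at: "(U' has_real_derivative U'' r) (at r)" if "0 < r" "r < R" for r
    using U_deriv U'_deriv that unfolding at_interior[OF that, symmetric] by simp_all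
  define W where "W = (\<lambda>r. (U r - 1) * (- 2 * r) - U' r * (2 * real n - r\<^sup>2))"
  have W_zero: "W r = 0" if "0 < r" "r < R" for r
  proof (rule zero_by_integrating_factor[of 0 R "radial_weight n" W, OF _ _ _ _ _ _ that])
    have "continuous_on {0..<R} U" "continuous_on {0..<R} U'"
      using U_deriv U'_deriv by (auto simp: continuous_on_eq_continuous_within intro: DERIV_continuous)
    then show "continuous_on {0..<R} W"
      unfolding W_def by (intro continuous_intros)
    show "continuous_on {0..<R} (radial_weight n)"
      unfolding radial_weight_def by (intro continuous_intros) auto
    show "W 0 = 0"
      using \<open>U' 0 = 0\<close> by (simp add: W_def)
    fix s assume s: "0 < s" "s < R"
    show "(radial_weight n has_real_derivative ((real n - 1) / s - s / 2) * radial_weight n s) (at s)"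
      using \<open>n \<ge> 1\<close> s(1) by (rule radial_weight_has_real_derivative)
    show "(W has_real_derivative - ((real n - 1) / s - s / 2) * W s) (at s)"
      unfolding W_def using U_at[OF s] U'_at[OF s] ode s
      by (intro radial_wronskian_has_real_derivative) auto
    show "radial_weight n s \<noteq> 0"
      using s(1) by (simp add: radial_weight_def)
  qed
  have "eventually (\<lambda>r. r \<in> {0<..<R} \<and> r \<noteq> sqrt (2 * real n)) (at_left R)"
    using eventually_at_left_real[OF \<open>R > 0\<close>] eventually_neq_at_within
    by (rule eventually_conj)
  then obtain a where "a < R" and a: "\<And>r. a < r \<Longrightarrow> r < R \<Longrightarrow> 0 < r \<and> r \<noteq> sqrt (2 * real n)"
    unfolding eventually_at_left[OF \<open>R > 0\<close>] by auto
  obtain c where "\<And>r. r \<in> {a<..<R} \<Longrightarrow> U r - 1 = c * (2 * real n - r\<^sup>2)"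
  proof (rule proportional_if_wronskian_zero[where g = "\<lambda>r. 2 * real n - r\<^sup>2" and g' = "\<lambda>r. - 2 * r"])
    fix r assume "r \<in> {a<..<R}"
    then have r: "0 < r" "r < R" "r \<noteq> sqrt (2 * real n)"
      using a by auto
    show "((\<lambda>r. U r - 1) has_real_derivative U' r) (at r)"
      using U_at[OF r(1,2)] by (auto intro!: derivative_eq_intros)
    show "((\<lambda>r. 2 * real n - r\<^sup>2) has_real_derivative - 2 * r) (at r)"
      by (auto intro!: derivative_eq_intros)
    show "2 * real n - r\<^sup>2 \<noteq> 0"
      using r(1,3) real_sqrt_unique[of r "2 * real n"] by auto
    show "(U r - 1) * (- 2 * r) = U' r * (2 * real n - r\<^sup>2)"
      using W_zero[OF r(1,2)] by (simp add: W_def)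
  qed blast
  with \<open>a < R\<close> show thesis
    by (intro that[of a c]) (auto simp: algebra_simps)
qed

lemma no_radial_solution_with_sqrt_slope:
  fixes n :: nat and U U' U'' :: "real \<Rightarrow> real"
  assumes "n \<ge> 1" "R > 0"
    and U_cont: "continuous_on {0..R} U"
    and U_deriv: "\<forall>r\<in>{0..<R}. (U has_real_derivative U' r) (at r within {0..<R})"
    and U'_deriv: "\<forall>r\<in>{0..<R}. (U' has_real_derivative U'' r) (at r within {0..<R})"
    and ode: "\<forall>r\<in>{0<..<R}. U'' r + ((real n - 1) / r - r / 2) * U' r + U r = 1"
    and "U' 0 = 0" "U R = 0"
    and slope: "((\<lambda>r. sqrt (U r) / (r - R)) \<longlongrightarrow> L) (at_left R)"
  shows False
proof -
  obtain a c where "a < R" and U_eq: "\<forall>r\<in>{a<..<R}. U r = 1 + c * (2 * real n - r\<^sup>2)"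
    using radial_solution_explicit_near_boundary[OF assms(1,2) U_deriv U'_deriv ode \<open>U' 0 = 0\<close>] .
  have near_R: "eventually (\<lambda>r. U r = 1 + c * (2 * real n - r\<^sup>2)) (at_left R)"
    using eventually_at_left_real[OF \<open>a < R\<close>] by eventually_elim (use U_eq in auto)
  have "(U \<longlongrightarrow> U R) (at R within {0..R})"
    using U_cont \<open>R > 0\<close> by (simp add: continuous_on_def)
  then have "(U \<longlongrightarrow> 0) (at_left R)"
    using \<open>R > 0\<close> \<open>U R = 0\<close> by (simp add: at_within_Icc_at_left)
  then have "((\<lambda>r. 1 + c * (2 * real n - r\<^sup>2)) \<longlongrightarrow> 0) (at_left R)"
    using near_R by (rule Lim_transform_eventually)
  moreover have "((\<lambda>r. 1 + c * (2 * real n - r\<^sup>2)) \<longlongrightarrow> 1 + c * (2 * real n - R\<^sup>2)) (at_left R)"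
    by (intro tendsto_intros)
  ultimately have boundary: "1 + c * (2 * real n - R\<^sup>2) = 0"
    using tendsto_unique[OF trivial_limit_at_left_real] by metis
  have "eventually (\<lambda>r. U r = c * (R\<^sup>2 - r\<^sup>2)) (at_left R)"
    using near_R by eventually_elim (use boundary in \<open>simp add: algebra_simps\<close>)
  then have "c = 0"
    using \<open>R > 0\<close> slope by (intro sqrt_quotient_convergent_imp_no_simple_zero)
  with boundary show False
    by simp
qed

theorem lemma6p9:
  fixes n :: nat
  assumes "n \<ge> 1"
  shows "\<not> (\<exists>(l::real) (R::real) (U::real \<Rightarrow> real) U' U''.
            l > 0 \<and> R > 0 \<and>
            (\<forall>r\<in>{0..R}. U r \<ge> 0) \<and>
            continuous_on {0..R} U \<and>
            (\<forall>r\<in>{0..<R}. (U has_real_derivative U' r) (at r within {0..<R})) \<and>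
            (\<forall>r\<in>{0..<R}. (U' has_real_derivative U'' r) (at r within {0..<R})) \<and>
            continuous_on {0..<R} U'' \<and>
            (\<forall>r\<in>{0<..<R}. U'' r + ((real n - 1) / r - r / 2) * U' r + U r = 1) \<and>
            U 0 = l \<and> U' 0 = 0 \<and> U R = 0 \<and>
            ((\<lambda>r. sqrt (U r) / (r - R)) \<longlongrightarrow> - sqrt 2 / 2) (at_left R))"
  using no_radial_solution_with_sqrt_slope[OF assms] by blast

end
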